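(* Define polynomials $Q_k(n)\in\mathbb{Q}[n]$ by $Q_0=1$, $Q_1=n$ and, for $k\ge 1$, $$Q_{k+1}(n)=(n-k)\,Q_k(n)+k(2n-k+1)\,Q_{k-1}(n).$$ Then for all integers $n\ge 0$ and $k\ge 0$, $$a_n^{(n-k)}=\frac{1}{k!}\,Q_k(n),$$ $Q_k$ has degree $k$, and explicitly $Q_2=n(n+1)$, $Q_3=(n-1)n(n+4)$, $Q_4=(n-1)n(n^2+7n-6)$, $Q_5=(n-2)(n-1)n(n+1)(n+12)$, $Q_6=(n-2)(n-1)n(n^3+18n^2+17n-120)$, $Q_7=(n-3)(n-2)(n-1)n(n^3+27n^2+116n-120)$, $Q_8=(n-3)(n-2)(n-1)n(n+1)(n+10)(n^2+23n-84)$, $Q_9=n(n-1)(n-2)(n-3)(n-4)(n^4+46n^3+467n^2+86n-3360)$, $Q_{10}=n(n-1)(n-2)(n-3)(n-4)(n^5+55n^4+665n^3-895n^2-16626n+15120)$.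
   Context: For integers $n\ge 0$ and $k\in\mathbb{Z}$, let $a_n^{(k)}$ be the coefficient of $x^{n+k}$ in $(1+x+x^2)^n$, so that $(1+x+x^2)^n=\sum_{k=-n}^{n}a_n^{(k)}x^{n+k}$ and $a_n^{(k)}=0$ for $|k|>n$. *)

theory Defs
  imports "HOL-Computational_Algebra.Polynomial"
begin

definition trinom :: "int poly" where
  "trinom = [:1, 1, 1:]"

definition acoef :: "nat \<Rightarrow> int \<Rightarrow> int" where
  "acoef n k = (if int n + k < 0 then 0 else coeff (trinom ^ n) (nat (int n + k)))"

definition nX :: "rat poly" where
  "nX = [:0, 1:]"

fun Q :: "nat \<Rightarrow> rat poly" where
  "Q 0 = 1"
| "Q (Suc 0) = nX"
| "Q (Suc (Suc k)) =
     (nX - of_nat (Suc k)) * Q (Suc k)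
     + smult (of_nat (Suc k)) (2 * nX - of_nat (Suc k) + 1) * Q k"

end

theory Submission
  imports Defs
begin

text \<open>
  Let \<open>c j\<close> be the coefficient of \<open>x^j\<close> in \<open>P = (1 + x + x^2)^n\<close>. Comparing coefficients
  of \<open>x^(j+1)\<close> in \<open>(1 + x + x^2) P' = n (1 + 2x) P\<close> gives \<open>c 0 = 1\<close>, \<open>c 1 = n\<close> and
  \<open>(j+2) c (j+2) = (n-j-1) c (j+1) + (2n-j) c j\<close>; multiplied by \<open>(j+1)!\<close> this is the
  recurrence defining \<open>Q (j+2)\<close> evaluated at \<open>n\<close>, so \<open>k! c k = Q k (n)\<close>. As \<open>P\<close> is
  palindromic of degree \<open>2n\<close>, the coefficient of \<open>x^(2n-k)\<close> is \<open>c k\<close> as well.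
\<close>

lemma mult_pderiv_power: "p * pderiv (p ^ n) = smult (of_nat n) (pderiv p * p ^ n)"
proof (cases n)
  case (Suc m)
  then show ?thesis
    by (simp only: pderiv_power_Suc) (simp add: mult_ac)
qed simp

lemma trinom_mult_pderiv_power:
  "trinom * pderiv (trinom ^ n) = smult (of_nat n) ([:1, 2:] * trinom ^ n)"
  by (simp add: mult_pderiv_power trinom_def pderiv_pCons)

lemma coeff_trinom_power_0: "coeff (trinom ^ n) 0 = 1"
  by (simp add: coeff_0_power trinom_def)

lemma coeff_trinom_power_1: "coeff (trinom ^ n) 1 = int n"
  using arg_cong[OF trinom_mult_pderiv_power, of "\<lambda>p. coeff p 0", of n]
  by (simp add: trinom_def coeff_pderiv coeff_0_power)

lemma coeff_trinom_power_Suc_Suc: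
  "int (Suc (Suc j)) * coeff (trinom ^ n) (Suc (Suc j))
     = (int n - int (Suc j)) * coeff (trinom ^ n) (Suc j)
       + (2 * int n - int j) * coeff (trinom ^ n) j"
  using arg_cong[OF trinom_mult_pderiv_power, of "\<lambda>p. coeff p (Suc j)", of n]
  by (cases j) (simp_all add: trinom_def coeff_pderiv algebra_simps)

lemma poly_Q_of_nat: "poly (Q k) (of_nat n) = fact k * of_int (coeff (trinom ^ n) k)"
proof (induction k rule: Q.induct)
  case 1
  show ?case by (simp add: coeff_trinom_power_0)
next
  case 2
  show ?case
    using coeff_trinom_power_1[of n] by (simp add: nX_def)
next
  case (3 k)
  let ?c = "\<lambda>j. of_int (coeff (trinom ^ n) j) :: rat"
  have coeff_rec: "of_nat (Suc (Suc k)) * ?c (Suc (Suc k))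
      = (of_nat n - of_nat (Suc k)) * ?c (Suc k) + (2 * of_nat n - of_nat k) * ?c k"
    using arg_cong[OF coeff_trinom_power_Suc_Suc, of "of_int :: int \<Rightarrow> rat", of k n] by simp
  have "fact (Suc (Suc k)) * ?c (Suc (Suc k))
      = fact (Suc k) * (of_nat (Suc (Suc k)) * ?c (Suc (Suc k)))"
    by (simp add: algebra_simps)
  also have "\<dots> = (of_nat n - of_nat (Suc k)) * (fact (Suc k) * ?c (Suc k))
      + of_nat (Suc k) * (2 * of_nat n - of_nat k) * (fact k * ?c k)"
    unfolding coeff_rec by (simp add: algebra_simps)
  also have "\<dots> = poly (Q (Suc (Suc k))) (of_nat n)"
    using 3 by (simp add: nX_def algebra_simps)
  finally show ?case ..
qed

lemma coeff_palindromic: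
  assumes "reflect_poly p = p" "k \<le> degree p"
  shows "coeff p (degree p - k) = coeff p k"
  using arg_cong[OF assms(1), of "\<lambda>q. coeff q k"] assms(2) by (simp add: coeff_reflect_poly)

lemma degree_trinom_power: "degree (trinom ^ n) = 2 * n"
  by (simp add: degree_power_eq trinom_def)

lemma reflect_trinom_power: "reflect_poly (trinom ^ n) = trinom ^ n"
proof -
  have "reflect_poly trinom = trinom"
    by (simp add: trinom_def reflect_poly_def)
  then show ?thesis
    by (simp add: reflect_poly_power)
qed

lemma acoef_eq_coeff: "acoef n (int n - int k) = coeff (trinom ^ n) k"
proof (cases "k \<le> 2 * n")
  case True
  then have "nat (int n + (int n - int k)) = degree (trinom ^ n) - k"
    by (simp add: degree_trinom_power)
  with True show ?thesis
    using coeff_palindromic[OF reflect_trinom_power, of k n]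
    by (simp add: acoef_def degree_trinom_power)
next
  case False
  then show ?thesis
    by (simp add: acoef_def coeff_eq_0 degree_trinom_power)
qed

lemma degree_Q: "degree (Q k) = k"
proof (induction k rule: Q.induct)
  case (3 k)
  have "degree (nX - of_nat (Suc k)) = 1"
    by (simp add: nX_def of_nat_poly)
  with 3(1) have lead: "degree ((nX - of_nat (Suc k)) * Q (Suc k)) = Suc (Suc k)"
    by (subst degree_mult_eq) auto
  let ?b = "smult (of_nat (Suc k)) (2 * nX - of_nat (Suc k) + 1) :: rat poly"
  have "degree ?b \<le> 1"
    by (simp add: nX_def of_nat_poly numeral_poly one_pCons)
  then have "degree (?b * Q k) < Suc (Suc k)"
    using degree_mult_le[of ?b "Q k"] 3(2) by linarith
  with lead show ?case
    by (subst Q.simps, subst degree_add_eq_left) auto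
qed (simp_all add: nX_def)

theorem corollary1:
  shows "(\<forall>n k :: nat. of_int (acoef n (int n - int k)) = poly (Q k) (of_nat n) / fact k)
    \<and> (\<forall>k. degree (Q k) = k)
    \<and> Q 2 = nX * (nX + 1)
    \<and> Q 3 = (nX - 1) * nX * (nX + 4)
    \<and> Q 4 = (nX - 1) * nX * (nX^2 + 7 * nX - 6)
    \<and> Q 5 = (nX - 2) * (nX - 1) * nX * (nX + 1) * (nX + 12)
    \<and> Q 6 = (nX - 2) * (nX - 1) * nX * (nX^3 + 18 * nX^2 + 17 * nX - 120)
    \<and> Q 7 = (nX - 3) * (nX - 2) * (nX - 1) * nX * (nX^3 + 27 * nX^2 + 116 * nX - 120)
    \<and> Q 8 = (nX - 3) * (nX - 2) * (nX - 1) * nX * (nX + 1) * (nX + 10) * (nX^2 + 23 * nX - 84)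
    \<and> Q 9 = nX * (nX - 1) * (nX - 2) * (nX - 3) * (nX - 4)
              * (nX^4 + 46 * nX^3 + 467 * nX^2 + 86 * nX - 3360)
    \<and> Q 10 = nX * (nX - 1) * (nX - 2) * (nX - 3) * (nX - 4)
              * (nX^5 + 55 * nX^4 + 665 * nX^3 - 895 * nX^2 - 16626 * nX + 15120)"
proof (intro conjI allI)
  fix n k :: nat
  show "of_int (acoef n (int n - int k)) = poly (Q k) (of_nat n) / fact k"
    by (simp add: acoef_eq_coeff poly_Q_of_nat)
next
  fix k
  show "degree (Q k) = k"
    by (rule degree_Q)
qed (simp_all add: eval_nat_numeral nX_def numeral_poly one_pCons)

end
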